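(* Let $A$ be a unital $C^*$-algebra with a strongly continuous action $\sigma$ of $S^1$, and let $\mathcal A\subseteq A$ be a norm-dense unital $*$-subalgebra. Suppose $P_0(\mathcal A)\subseteq\mathcal A$ and that there exist finitely many $\zeta_1^R,\dots,\zeta_k^R\in\mathcal A\cap A_1$ and $\zeta_1^L,\dots,\zeta_m^L\in\mathcal A\cap A_1$ with $\sum_{j=1}^k\zeta_j^R(\zeta_j^R)^*=1=\sum_{j=1}^m(\zeta_j^L)^*\zeta_j^L$. Then for every $n\in\mathbb Z$: $P_n(\mathcal A)=\mathcal A_n:=\mathcal A\cap A_n$, and there exist finitely many $\zeta_{(n,1)},\dots,\zeta_{(n,m_n)}\in\mathcal A_n$ such that $\sum_{j=1}^{m_n}\zeta_{(n,j)}\zeta_{(n,j)}^*=1$. In particular, $\mathcal A_n$ is norm-dense in $A_n$ and has a finite frame.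
   Context: $A_n:=\{a\in A:\sigma_\lambda(a)=\lambda^na\ \forall\lambda\in S^1\}$ and $P_n(a):=\frac1{2\pi}\int_0^{2\pi}e^{-itn}\sigma_{e^{it}}(a)dt$. $A_n$ is regarded as a right Hilbert $C^*$-module over $A_0$ with inner product $\langle a,b\rangle=a^*b$. A finite frame for $\mathcal A_n$ is a finite family $\zeta_1,\dots,\zeta_p\in\mathcal A_n$ with $\sum_j\zeta_j\zeta_j^*x=x$ for all $x\in\mathcal A_n$. *)

theory Defs
  imports "HOL-Analysis.Analysis"
begin

text \<open>A unital C*-algebra is modelled on a type 'a of class real_normed_algebra_1 and banach
  (complete normed real algebra with unit of norm 1), together with a complex scalar
  multiplication sc extending the real one and an involution st satisfying the C*-identity.\<close>

definition cstar_alg :: "(complex \<Rightarrow> 'a::{real_normed_algebra_1,banach} \<Rightarrow> 'a) \<Rightarrow> ('a \<Rightarrow> 'a) \<Rightarrow> bool" where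
  "cstar_alg sc st \<longleftrightarrow>
     (\<forall>r x. sc (complex_of_real r) x = r *\<^sub>R x) \<and>
     (\<forall>c d x. sc (c * d) x = sc c (sc d x)) \<and>
     (\<forall>c x y. sc c (x + y) = sc c x + sc c y) \<and>
     (\<forall>c d x. sc (c + d) x = sc c x + sc d x) \<and>
     (\<forall>c x y. sc c (x * y) = sc c x * y \<and> sc c (x * y) = x * sc c y) \<and>
     (\<forall>c x. norm (sc c x) = cmod c * norm x) \<and>
     (\<forall>x. st (st x) = x) \<and>
     (\<forall>x y. st (x + y) = st x + st y) \<and>
     (\<forall>c x. st (sc c x) = sc (cnj c) (st x)) \<and>
     (\<forall>x y. st (x * y) = st y * st x) \<and>
     (\<forall>x. norm (st x * x) = (norm x)\<^sup>2)"

definition s1_action :: "(complex \<Rightarrow> 'a::{real_normed_algebra_1,banach} \<Rightarrow> 'a) \<Rightarrow> ('a \<Rightarrow> 'a)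
    \<Rightarrow> (complex \<Rightarrow> 'a \<Rightarrow> 'a) \<Rightarrow> bool" where
  "s1_action sc st \<sigma> \<longleftrightarrow>
     (\<forall>l. cmod l = 1 \<longrightarrow>
        (\<forall>c x. \<sigma> l (sc c x) = sc c (\<sigma> l x)) \<and>
        (\<forall>x y. \<sigma> l (x + y) = \<sigma> l x + \<sigma> l y) \<and>
        (\<forall>x y. \<sigma> l (x * y) = \<sigma> l x * \<sigma> l y) \<and>
        \<sigma> l 1 = 1 \<and>
        (\<forall>x. \<sigma> l (st x) = st (\<sigma> l x))) \<and>
     (\<forall>x. \<sigma> 1 x = x) \<and>
     (\<forall>l m x. cmod l = 1 \<longrightarrow> cmod m = 1 \<longrightarrow> \<sigma> (l * m) x = \<sigma> l (\<sigma> m x)) \<and>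
     (\<forall>x. continuous_on (sphere 0 1) (\<lambda>l. \<sigma> l x))"

definition spec_sub :: "(complex \<Rightarrow> 'a \<Rightarrow> 'a) \<Rightarrow> (complex \<Rightarrow> 'a \<Rightarrow> 'a) \<Rightarrow> int \<Rightarrow> 'a set" where
  "spec_sub sc \<sigma> n = {a. \<forall>l. cmod l = 1 \<longrightarrow> \<sigma> l a = sc (l powi n) a}"

definition spec_proj :: "(complex \<Rightarrow> 'a::{real_normed_algebra_1,banach} \<Rightarrow> 'a)
    \<Rightarrow> (complex \<Rightarrow> 'a \<Rightarrow> 'a) \<Rightarrow> int \<Rightarrow> 'a \<Rightarrow> 'a" where
  "spec_proj sc \<sigma> n a = (1 / (2 * pi)) *\<^sub>R
     integral {0 .. 2 * pi}
       (\<lambda>t. sc (exp (- \<i> * complex_of_real t * of_int n)) (\<sigma> (exp (\<i> * complex_of_real t)) a))"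

definition dense_unital_star_subalg :: "(complex \<Rightarrow> 'a::{real_normed_algebra_1,banach} \<Rightarrow> 'a)
    \<Rightarrow> ('a \<Rightarrow> 'a) \<Rightarrow> 'a set \<Rightarrow> bool" where
  "dense_unital_star_subalg sc st B \<longleftrightarrow>
     1 \<in> B \<and>
     (\<forall>x\<in>B. \<forall>y\<in>B. x + y \<in> B \<and> x * y \<in> B) \<and>
     (\<forall>c. \<forall>x\<in>B. sc c x \<in> B) \<and>
     (\<forall>x\<in>B. st x \<in> B) \<and>
     closure B = UNIV"

end

theory Submission
  imports Defs "HOL-Computational_Algebra.Formal_Power_Series"
begin

(* Every unital *-endomorphism phi of a C*-algebra is contractive: for self-adjoint y with
   norm y < 1 the binomial series yields a self-adjoint s = sqrt (1 - y^2) commuting with y, so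
   phi y + i phi s is an isometry and norm (phi y) <= 1; the C*-identity reduces the general case
   to the self-adjoint one. Hence every sigma_l and every spectral projection P_n is a contraction.
   Invariance of the integral over a period under rotation shows that P_n maps into A_n; it fixes
   A_n, and P_n (z x) = z P_(n-d) x for z in A_d. Given zeta_j in B with degree d and
   sum zeta_j zeta_j^* = 1, writing x = sum zeta_j (zeta_j^* x) shows that P_n B <= B implies
   P_(n+d) B <= B. The frames of degree 1 and -1 (the latter made of the adjoints of the zeta^L)
   therefore propagate P_0 B <= B to every degree, and their products are frames of every
   degree. Density of B in A_n follows because P_n is a contraction onto A_n preserving B. *)

section \<open>A binomial square root in Banach algebras\<close>

lemma abs_gbinomial_half_le_one: "\<bar>(1/2::real) gchoose j\<bar> \<le> 1"
proof (induction j)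
  case (Suc j)
  have "real (Suc j) * ((1/2::real) gchoose Suc j) = (1/2 - real j) * ((1/2::real) gchoose j)"
    using gbinomial_mult_1[of "1/2::real" j] by (simp add: algebra_simps)
  then have "real (Suc j) * \<bar>(1/2::real) gchoose Suc j\<bar>
      = \<bar>1/2 - real j\<bar> * \<bar>(1/2::real) gchoose j\<bar>"
    by (metis abs_mult abs_of_nat)
  also have "\<dots> \<le> real (Suc j) * 1"
    using Suc by (intro mult_mono) auto
  finally show ?case by simp
qed simp

definition sqrt_one_minus_coeff :: "nat \<Rightarrow> real" where
  "sqrt_one_minus_coeff j = (-1) ^ j * ((1/2) gchoose j)"

lemma sqrt_one_minus_coeff_convolution:
  "(\<Sum>i\<le>k. sqrt_one_minus_coeff i * sqrt_one_minus_coeff (k - i))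
    = (if k = 0 then 1 else if k = 1 then -1 else 0)"
proof -
  have "(\<Sum>i\<le>k. sqrt_one_minus_coeff i * sqrt_one_minus_coeff (k - i))
      = (-1) ^ k * (\<Sum>i\<le>k. ((1/2::real) gchoose i) * ((1/2) gchoose (k - i)))"
    unfolding sum_distrib_left
    by (rule sum.cong) (auto simp: sqrt_one_minus_coeff_def power_add[symmetric])
  also have "\<dots> = (-1) ^ k * ((1::real) gchoose k)"
    using gbinomial_Vandermonde[of "1/2::real" "1/2" k] by (simp add: atLeast0AtMost)
  also have "(1::real) gchoose k = of_nat (1 choose k)"
    by (simp add: binomial_gbinomial)
  finally show ?thesis by (cases k) (auto simp: binomial_eq_0)
qed

definition sqrt_one_minus :: "'a::{real_normed_algebra_1,banach} \<Rightarrow> 'a" where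
  "sqrt_one_minus w = (\<Sum>j. sqrt_one_minus_coeff j *\<^sub>R w ^ j)"

lemma summable_norm_sqrt_one_minus_series:
  fixes w :: "'a::{real_normed_algebra_1,banach}"
  assumes "norm w < 1"
  shows "summable (\<lambda>j. norm (sqrt_one_minus_coeff j *\<^sub>R w ^ j))"
proof (rule summable_comparison_test'[OF summable_geometric[of "norm w"]])
  show "norm (norm (sqrt_one_minus_coeff j *\<^sub>R w ^ j)) \<le> norm w ^ j" for j
    using mult_mono[OF abs_gbinomial_half_le_one norm_power_ineq zero_le_one norm_ge_zero]
    by (simp add: sqrt_one_minus_coeff_def abs_mult)
qed (use assms in simp)

lemma summable_sqrt_one_minus_series:
  fixes w :: "'a::{real_normed_algebra_1,banach}"
  shows "norm w < 1 \<Longrightarrow> summable (\<lambda>j. sqrt_one_minus_coeff j *\<^sub>R w ^ j)"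
  by (rule summable_norm_cancel[OF summable_norm_sqrt_one_minus_series])

lemma sqrt_one_minus_square:
  fixes w :: "'a::{real_normed_algebra_1,banach}"
  assumes "norm w < 1"
  shows "sqrt_one_minus w * sqrt_one_minus w = 1 - w"
proof -
  let ?c = sqrt_one_minus_coeff
  have "sqrt_one_minus w * sqrt_one_minus w
      = (\<Sum>k. \<Sum>i\<le>k. (?c i *\<^sub>R w ^ i) * (?c (k - i) *\<^sub>R w ^ (k - i)))"
    unfolding sqrt_one_minus_def
    using Cauchy_product[OF summable_norm_sqrt_one_minus_series summable_norm_sqrt_one_minus_series] assms
    by simp
  also have "\<dots> = (\<Sum>k. (if k = 0 then 1 else if k = 1 then -1 else 0) *\<^sub>R w ^ k)"
  proof -
    have "(\<Sum>i\<le>k. (?c i *\<^sub>R w ^ i) * (?c (k - i) *\<^sub>R w ^ (k - i)))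
        = (\<Sum>i\<le>k. ?c i * ?c (k - i)) *\<^sub>R w ^ k" for k
      unfolding scaleR_sum_left by (rule sum.cong) (auto simp: power_add[symmetric])
    then show ?thesis by (simp only: sqrt_one_minus_coeff_convolution)
  qed
  also have "\<dots> = (\<Sum>k\<in>{0,1}. (if k = 0 then 1 else if k = 1 then -1 else 0) *\<^sub>R w ^ k)"
    by (rule suminf_finite) auto
  finally show ?thesis by simp
qed

lemma sqrt_one_minus_commute:
  fixes w :: "'a::{real_normed_algebra_1,banach}"
  assumes "norm w < 1" and "y * w = w * y"
  shows "y * sqrt_one_minus w = sqrt_one_minus w * y"
proof -
  have "y * sqrt_one_minus w = (\<Sum>j. y * (sqrt_one_minus_coeff j *\<^sub>R w ^ j))"
    unfolding sqrt_one_minus_def by (rule suminf_mult[OF summable_sqrt_one_minus_series[OF assms(1)], symmetric])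
  also have "\<dots> = (\<Sum>j. (sqrt_one_minus_coeff j *\<^sub>R w ^ j) * y)"
    using power_commuting_commutes[OF assms(2)[symmetric]] by simp
  also have "\<dots> = sqrt_one_minus w * y"
    unfolding sqrt_one_minus_def by (rule suminf_mult2[OF summable_sqrt_one_minus_series[OF assms(1)], symmetric])
  finally show ?thesis .
qed

section \<open>Unital *-endomorphisms of a C*-algebra are contractive\<close>

locale cstar_algebra =
  fixes sc :: "complex \<Rightarrow> 'a::{real_normed_algebra_1,banach} \<Rightarrow> 'a"
    and st :: "'a \<Rightarrow> 'a"
  assumes cstar_alg: "cstar_alg sc st"
begin

lemma sc_of_real: "sc (of_real r) x = r *\<^sub>R x"
  and sc_sc: "sc c (sc d x) = sc (c * d) x"
  and sc_add_right: "sc c (x + y) = sc c x + sc c y"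
  and sc_add_left: "sc (c + d) x = sc c x + sc d x"
  and mult_sc_left: "sc c x * y = sc c (x * y)"
  and mult_sc_right: "x * sc c y = sc c (x * y)"
  and norm_sc: "norm (sc c x) = cmod c * norm x"
  and st_st [simp]: "st (st x) = x"
  and st_add: "st (x + y) = st x + st y"
  and st_sc: "st (sc c x) = sc (cnj c) (st x)"
  and st_mult: "st (x * y) = st y * st x"
  and norm_st_mult_self: "norm (st x * x) = (norm x)\<^sup>2"
  using cstar_alg unfolding cstar_alg_def by metis+

lemma sc_scaleR: "sc c (r *\<^sub>R x) = r *\<^sub>R sc c x"
  by (metis mult.commute sc_sc sc_of_real)

lemma bounded_linear_sc: "bounded_linear (sc c)"
  by (rule bounded_linear_intro[where K = "cmod c"]) (auto simp: sc_add_right sc_scaleR norm_sc mult.commute)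

lemma sc_eq_Re_Im: "sc c x = Re c *\<^sub>R x + Im c *\<^sub>R sc \<i> x"
proof -
  have "c = of_real (Re c) + of_real (Im c) * \<i>"
    by (simp add: complex_eq_iff)
  then show ?thesis
    by (metis sc_add_left sc_sc sc_of_real)
qed

lemma continuous_on_sc:
  assumes "continuous_on S f" and "continuous_on S g"
  shows "continuous_on S (\<lambda>t. sc (f t) (g t))"
proof -
  have sc_Re_Im: "(\<lambda>t. sc (f t) (g t)) = (\<lambda>t. Re (f t) *\<^sub>R g t + Im (f t) *\<^sub>R sc \<i> (g t))"
    by (rule ext) (rule sc_eq_Re_Im)
  show ?thesis
    unfolding sc_Re_Im
    by (intro continuous_intros bounded_linear.continuous_on[OF bounded_linear_sc] assms)
qed

lemma sc_minus_left: "sc (- c) x = - sc c x"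
  using sc_add_left[of c "- c" x] sc_of_real[of 0 x] by (simp add: eq_neg_iff_add_eq_0 add.commute)

lemma sc_one [simp]: "sc 1 x = x"
  using sc_of_real[of 1 x] by simp

lemma st_scaleR: "st (r *\<^sub>R x) = r *\<^sub>R st x"
  using st_sc[of "of_real r" x] by (simp add: sc_of_real)

lemma st_one [simp]: "st 1 = 1"
  using st_mult[of "st 1" 1] by simp

lemma st_power: "st w = w \<Longrightarrow> st (w ^ j) = w ^ j"
  by (induction j) (auto simp: st_mult power_commutes)

lemma norm_st [simp]: "norm (st x) = norm x"
proof -
  have "norm x \<le> norm (st x)" for x
  proof (cases "x = 0")
    case False
    have "(norm x)\<^sup>2 \<le> norm (st x) * norm x"
      using norm_st_mult_self[of x] norm_mult_ineq[of "st x" x] by simp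
    then show ?thesis
      using False by (simp add: power2_eq_square)
  qed simp
  from this[of x] this[of "st x"] show ?thesis by simp
qed

lemma bounded_linear_st: "bounded_linear st"
  by (rule bounded_linear_intro[where K = 1]) (auto simp: st_add st_scaleR)

lemma st_sqrt_one_minus:
  assumes "st w = w" and "norm w < 1"
  shows "st (sqrt_one_minus w) = sqrt_one_minus w"
  unfolding sqrt_one_minus_def
  using bounded_linear.suminf[OF bounded_linear_st summable_sqrt_one_minus_series[OF assms(2)]]
  by (simp add: st_scaleR st_power[OF assms(1)])

lemma norm_eq_1_if_isometry:
  assumes "st z * z = 1"
  shows "norm z = 1"
  using norm_st_mult_self[of z] norm_ge_zero[of z] assms by (auto simp: power2_eq_1_iff)

text \<open>The element a + ib is then an isometry, and a is the mean of it and its adjoint.\<close>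

lemma norm_le_1_if_sum_squares_eq_1:
  assumes "st a = a" and "st b = b" and "a * b = b * a" and "a * a + b * b = 1"
  shows "norm a \<le> 1"
proof -
  define z where "z = a + sc \<i> b"
  have st_z: "st z = a - sc \<i> b"
    by (simp add: z_def st_add st_sc sc_minus_left assms(1,2))
  have "sc \<i> b * sc \<i> b = - (b * b)"
    by (simp add: mult_sc_left mult_sc_right sc_sc sc_minus_left)
  moreover have "a * sc \<i> b = sc \<i> b * a"
    by (simp add: mult_sc_left mult_sc_right assms(3))
  ultimately have "st z * z = a * a + b * b"
    unfolding st_z by (simp add: z_def algebra_simps)
  then have "norm z = 1"
    using assms(4) by (simp add: norm_eq_1_if_isometry)
  moreover have "2 *\<^sub>R a = z + st z"
    unfolding st_z by (simp add: z_def scaleR_2)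
  ultimately have "norm (2 *\<^sub>R a) \<le> 2"
    using norm_triangle_ineq[of z "st z"] by simp
  then show ?thesis
    by simp
qed

end

locale unital_star_endo = cstar_algebra sc st
  for sc :: "complex \<Rightarrow> 'a::{real_normed_algebra_1,banach} \<Rightarrow> 'a" and st +
  fixes \<phi> :: "'a \<Rightarrow> 'a"
  assumes hom_add: "\<phi> (x + y) = \<phi> x + \<phi> y"
    and hom_scaleR: "\<phi> (r *\<^sub>R x) = r *\<^sub>R \<phi> x"
    and hom_mult: "\<phi> (x * y) = \<phi> x * \<phi> y"
    and hom_one: "\<phi> 1 = 1"
    and hom_st: "\<phi> (st x) = st (\<phi> x)"
begin

text \<open>With s = sqrt (1 - y^2) the images of y and s are commuting self-adjoint elements whose
  squares add up to 1.\<close>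

lemma norm_hom_le_1:
  assumes y: "st y = y" and "norm y < 1"
  shows "norm (\<phi> y) \<le> 1"
proof -
  have norm_yy: "norm (y * y) < 1"
    using norm_mult_ineq[of y y] assms(2) mult_strict_mono'[of "norm y" 1 "norm y" 1] by simp
  define s where "s = sqrt_one_minus (y * y)"
  have "st s = s"
    unfolding s_def by (simp add: st_sqrt_one_minus st_mult y norm_yy)
  moreover have "y * s = s * y"
    unfolding s_def by (simp add: sqrt_one_minus_commute norm_yy mult.assoc)
  moreover have "y * y + s * s = 1"
    unfolding s_def by (simp add: sqrt_one_minus_square norm_yy)
  ultimately show ?thesis
    using norm_le_1_if_sum_squares_eq_1[of "\<phi> y" "\<phi> s"]
    by (metis hom_st hom_mult hom_add hom_one y)
qed

lemma norm_hom_le_selfadjoint: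
  assumes "st h = h"
  shows "norm (\<phi> h) \<le> norm h"
proof (rule field_le_epsilon)
  fix e :: real
  assume "0 < e"
  define r where "r = norm h + e"
  have r: "r > 0" "norm h < r"
    using \<open>0 < e\<close> by (simp_all add: r_def add_nonneg_pos)
  have "norm (\<phi> (inverse r *\<^sub>R h)) \<le> 1"
    using r by (intro norm_hom_le_1) (simp_all add: st_scaleR assms field_simps)
  then show "norm (\<phi> h) \<le> norm h + e"
    using r by (simp add: hom_scaleR field_simps) (simp add: r_def)
qed

lemma norm_hom_le: "norm (\<phi> x) \<le> norm x"
proof -
  have "(norm (\<phi> x))\<^sup>2 = norm (\<phi> (st x * x))"
    by (simp add: hom_mult hom_st norm_st_mult_self)
  also have "\<dots> \<le> norm (st x * x)"
    by (rule norm_hom_le_selfadjoint) (simp add: st_mult)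
  also have "\<dots> = (norm x)\<^sup>2"
    by (rule norm_st_mult_self)
  finally show ?thesis
    by (rule power2_le_imp_le) simp
qed

end

section \<open>Spectral projections of a circle action\<close>

lemma integral_periodic_shift:
  fixes f :: "real \<Rightarrow> 'b::banach"
  assumes cont: "continuous_on UNIV f" and periodic: "\<And>t. f (t + p) = f t"
    and "0 \<le> \<theta>" "\<theta> \<le> p"
  shows "integral {0..p} (\<lambda>t. f (\<theta> + t)) = integral {0..p} f"
proof -
  have int: "f integrable_on {a..b}" for a b
    by (rule integrable_continuous_interval) (rule continuous_on_subset[OF cont], simp)
  have "integral {0..p} (\<lambda>t. f (\<theta> + t)) = integral {\<theta>..p + \<theta>} f"
    using integral_shift_Icc_real[of 0 p f \<theta>] by (simp add: o_def)
  also have "\<dots> = integral {\<theta>..p} f + integral {p..p + \<theta>} f"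
    using Henstock_Kurzweil_Integration.integral_combine[where a = \<theta> and c = p and b = "p + \<theta>" and f = f]
      assms(3,4) int by simp
  also have "integral {p..p + \<theta>} f = integral {0..\<theta>} f"
    using integral_shift_Icc_real[of 0 \<theta> f p] by (simp add: o_def periodic add.commute)
  also have "integral {\<theta>..p} f + integral {0..\<theta>} f = integral {0..p} f"
    using Henstock_Kurzweil_Integration.integral_combine[where a = 0 and c = \<theta> and b = p and f = f]
      assms(3,4) int by (simp add: add.commute)
  finally show ?thesis .
qed

lemma exp_i_times_powi: "exp (\<i> * of_real t) powi n = exp (\<i> * of_real t * of_int n)"
  by (subst exp_power_int) (simp add: mult_ac)

locale circle_action = cstar_algebra sc st
  for sc :: "complex \<Rightarrow> 'a::{real_normed_algebra_1,banach} \<Rightarrow> 'a" and st +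
  fixes \<sigma> :: "complex \<Rightarrow> 'a \<Rightarrow> 'a"
  assumes s1_action: "s1_action sc st \<sigma>"
begin

lemma action_sc: "cmod l = 1 \<Longrightarrow> \<sigma> l (sc c x) = sc c (\<sigma> l x)"
  and action_add: "cmod l = 1 \<Longrightarrow> \<sigma> l (x + y) = \<sigma> l x + \<sigma> l y"
  and action_mult: "cmod l = 1 \<Longrightarrow> \<sigma> l (x * y) = \<sigma> l x * \<sigma> l y"
  and action_one: "cmod l = 1 \<Longrightarrow> \<sigma> l 1 = 1"
  and action_st: "cmod l = 1 \<Longrightarrow> \<sigma> l (st x) = st (\<sigma> l x)"
  and action_action: "cmod l = 1 \<Longrightarrow> cmod m = 1 \<Longrightarrow> \<sigma> l (\<sigma> m x) = \<sigma> (l * m) x"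
  and continuous_on_action: "continuous_on (sphere 0 1) (\<lambda>l. \<sigma> l x)"
  using s1_action unfolding s1_action_def by simp_all

lemma action_scaleR: "cmod l = 1 \<Longrightarrow> \<sigma> l (r *\<^sub>R x) = r *\<^sub>R \<sigma> l x"
  using action_sc[of l "of_real r" x] by (simp add: sc_of_real)

lemma unital_star_endo_action: "cmod l = 1 \<Longrightarrow> unital_star_endo sc st (\<sigma> l)"
  by unfold_locales (simp_all add: action_add action_scaleR action_mult action_one action_st)

lemma norm_action_le: "cmod l = 1 \<Longrightarrow> norm (\<sigma> l x) \<le> norm x"
  by (rule unital_star_endo.norm_hom_le[OF unital_star_endo_action])

lemma bounded_linear_action: "cmod l = 1 \<Longrightarrow> bounded_linear (\<sigma> l)"
  by (rule bounded_linear_intro[where K = 1]) (simp_all add: action_add action_scaleR norm_action_le)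

abbreviation proj :: "int \<Rightarrow> 'a \<Rightarrow> 'a" where
  "proj \<equiv> spec_proj sc \<sigma>"

abbreviation spec :: "int \<Rightarrow> 'a set" where
  "spec \<equiv> spec_sub sc \<sigma>"

definition proj_integrand :: "int \<Rightarrow> 'a \<Rightarrow> real \<Rightarrow> 'a" where
  "proj_integrand n a t = sc (exp (- \<i> * of_real t * of_int n)) (\<sigma> (exp (\<i> * of_real t)) a)"

lemma proj_eq_integral: "proj n a = (1 / (2 * pi)) *\<^sub>R integral {0..2 * pi} (proj_integrand n a)"
  unfolding spec_proj_def proj_integrand_def ..

lemma continuous_proj_integrand: "continuous_on UNIV (proj_integrand n a)"
proof -
  have "continuous_on UNIV (\<lambda>t. \<sigma> (exp (\<i> * of_real t)) a)"
    by (rule continuous_on_compose2[OF continuous_on_action], intro continuous_intros) auto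
  then show ?thesis
    unfolding proj_integrand_def by (intro continuous_on_sc continuous_intros)
qed

lemma integrable_proj_integrand: "proj_integrand n a integrable_on {s..t}"
  by (rule integrable_continuous_interval) (rule continuous_on_subset[OF continuous_proj_integrand], simp)

lemma proj_add: "proj n (a + b) = proj n a + proj n b"
proof -
  have "proj_integrand n (a + b) = (\<lambda>t. proj_integrand n a t + proj_integrand n b t)"
    by (simp add: fun_eq_iff proj_integrand_def action_add sc_add_right)
  then show ?thesis
    unfolding proj_eq_integral
    by (simp add: integral_add[OF integrable_proj_integrand integrable_proj_integrand] scaleR_add_right)
qed

lemma proj_diff: "proj n (a - b) = proj n a - proj n b"
  using proj_add[of n "a - b" b] by (simp add: algebra_simps)

lemma proj_sum_list: "proj n (\<Sum>x\<leftarrow>xs. f x) = (\<Sum>x\<leftarrow>xs. proj n (f x))"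
proof (induction xs)
  case Nil
  show ?case
    using proj_diff[of n 0 0] by simp
qed (simp add: proj_add)

lemma norm_proj_le: "norm (proj n a) \<le> norm a"
proof -
  have "norm (integral {0..2 * pi} (proj_integrand n a)) \<le> norm a * (2 * pi - 0)"
  proof (rule integral_bound)
    show "continuous_on {0..2 * pi} (proj_integrand n a)"
      by (rule continuous_on_subset[OF continuous_proj_integrand]) simp
    show "norm (proj_integrand n a t) \<le> norm a" for t
      using norm_action_le[of "exp (\<i> * of_real t)" a]
      by (simp add: proj_integrand_def norm_sc)
  qed simp
  then show ?thesis
    unfolding proj_eq_integral by (simp add: field_simps)
qed

lemma one_in_spec_0: "1 \<in> spec 0"
  unfolding spec_sub_def by (simp add: action_one)

lemma st_in_spec:
  assumes "z \<in> spec d"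
  shows "st z \<in> spec (- d)"
  unfolding spec_sub_def
proof (intro CollectI allI impI)
  fix l :: complex
  assume l: "cmod l = 1"
  then have "cnj l = inverse l"
    using divide_conv_cnj[of l 1] by (simp add: field_simps)
  then have "cnj l powi d = l powi (- d)"
    by (simp add: power_int_minus power_int_inverse)
  then show "\<sigma> l (st z) = sc (l powi - d) (st z)"
    using assms l by (simp add: spec_sub_def action_st st_sc)
qed

lemma mult_in_spec:
  assumes "x \<in> spec p" and "y \<in> spec q"
  shows "x * y \<in> spec (p + q)"
  unfolding spec_sub_def
proof (intro CollectI allI impI)
  fix l :: complex
  assume l: "cmod l = 1"
  then have "l \<noteq> 0"
    by auto
  then have "l powi p * l powi q = l powi (p + q)"
    by (simp add: power_int_add)
  with assms l show "\<sigma> l (x * y) = sc (l powi (p + q)) (x * y)"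
    by (simp add: spec_sub_def action_mult mult_sc_left mult_sc_right sc_sc mult.commute)
qed

lemma proj_eq_self:
  assumes "x \<in> spec n"
  shows "proj n x = x"
proof -
  have "proj_integrand n x = (\<lambda>t. x)"
    using assms unfolding fun_eq_iff
    by (simp add: spec_sub_def proj_integrand_def exp_i_times_powi sc_sc
        flip: exp_add)
  then show ?thesis
    unfolding proj_eq_integral by simp
qed

lemma proj_mult_left:
  assumes "z \<in> spec d"
  shows "proj n (z * y) = z * proj (n - d) y"
proof -
  have "proj_integrand n (z * y) = (\<lambda>t. z * proj_integrand (n - d) y t)"
  proof
    fix t
    have "exp (- \<i> * of_real t * of_int n) * exp (\<i> * of_real t) powi d
        = exp (- \<i> * of_real t * of_int (n - d))"
      by (simp add: exp_i_times_powi algebra_simps flip: exp_add)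
    then show "proj_integrand n (z * y) t = z * proj_integrand (n - d) y t"
      using assms
      by (simp add: proj_integrand_def spec_sub_def action_mult
          mult_sc_left mult_sc_right sc_sc)
  qed
  then have "integral {0..2 * pi} (proj_integrand n (z * y))
      = z * integral {0..2 * pi} (proj_integrand (n - d) y)"
    using integral_linear[OF integrable_proj_integrand bounded_linear_mult_right[of z]]
    by (simp add: o_def)
  then show ?thesis
    unfolding proj_eq_integral by simp
qed

lemma proj_integrand_periodic: "proj_integrand n a (t + 2 * pi) = proj_integrand n a t"
proof -
  have "\<i> * of_real (t + 2 * pi) = \<i> * of_real t + \<i> * (of_int 1 * (of_real pi * 2))"
    and "- \<i> * of_real (t + 2 * pi) * of_int n
       = - \<i> * of_real t * of_int n + \<i> * (of_int (- n) * (of_real pi * 2))"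
    by (simp_all add: algebra_simps)
  then show ?thesis
    unfolding proj_integrand_def by (simp only: exp_plus_2pin)
qed

lemma action_proj_integrand:
  "\<sigma> (exp (\<i> * of_real \<theta>)) (proj_integrand n a t)
    = sc (exp (\<i> * of_real \<theta>) powi n) (proj_integrand n a (\<theta> + t))"
proof -
  have "exp (- \<i> * of_real t * of_int n)
      = exp (\<i> * of_real \<theta>) powi n * exp (- \<i> * of_real (\<theta> + t) * of_int n)"
    by (simp add: exp_i_times_powi algebra_simps flip: exp_add)
  moreover have "exp (\<i> * of_real \<theta>) * exp (\<i> * of_real t) = exp (\<i> * of_real (\<theta> + t))"
    by (simp add: algebra_simps flip: exp_add)
  ultimately show ?thesis
    by (simp add: proj_integrand_def action_sc action_action sc_sc)
qed

lemma proj_in_spec: "proj n a \<in> spec n"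
  unfolding spec_sub_def
proof (intro CollectI allI impI)
  fix l :: complex
  assume "cmod l = 1"
  define \<theta> where "\<theta> = Arg2pi l"
  have \<theta>: "0 \<le> \<theta>" "\<theta> \<le> 2 * pi"
    using Arg2pi[of l] by (simp_all add: \<theta>_def)
  have l: "l = exp (\<i> * of_real \<theta>)"
    using \<open>cmod l = 1\<close> complex_norm_eq_1_exp[of l] by (simp add: \<theta>_def)
  have shifted_integrable: "(\<lambda>t. proj_integrand n a (\<theta> + t)) integrable_on {0..2 * pi}"
    by (rule integrable_continuous_interval)
      (intro continuous_on_compose2[OF continuous_proj_integrand] continuous_intros; simp)
  have "\<sigma> l (integral {0..2 * pi} (proj_integrand n a))
      = integral {0..2 * pi} (\<lambda>t. \<sigma> l (proj_integrand n a t))"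
    using integral_linear[OF integrable_proj_integrand bounded_linear_action[OF \<open>cmod l = 1\<close>]]
    by (simp add: o_def)
  also have "\<dots> = integral {0..2 * pi} (\<lambda>t. sc (l powi n) (proj_integrand n a (\<theta> + t)))"
    by (simp add: l action_proj_integrand)
  also have "\<dots> = sc (l powi n) (integral {0..2 * pi} (\<lambda>t. proj_integrand n a (\<theta> + t)))"
    using integral_linear[OF shifted_integrable bounded_linear_sc] by (simp add: o_def)
  also have "integral {0..2 * pi} (\<lambda>t. proj_integrand n a (\<theta> + t))
      = integral {0..2 * pi} (proj_integrand n a)"
    by (rule integral_periodic_shift[OF continuous_proj_integrand proj_integrand_periodic \<theta>])
  finally show "\<sigma> l (proj n a) = sc (l powi n) (proj n a)"
    unfolding proj_eq_integral using \<open>cmod l = 1\<close> by (simp add: action_scaleR sc_scaleR)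
qed

lemma proj_image_eq:
  assumes "proj n ` B \<subseteq> B"
  shows "proj n ` B = B \<inter> spec n"
proof
  show "proj n ` B \<subseteq> B \<inter> spec n"
    using assms proj_in_spec by auto
  show "B \<inter> spec n \<subseteq> proj n ` B"
    using proj_eq_self by force
qed

lemma spec_subset_closure:
  assumes "closure B = UNIV" and "proj n ` B \<subseteq> B"
  shows "spec n \<subseteq> closure (B \<inter> spec n)"
proof
  fix x
  assume x: "x \<in> spec n"
  show "x \<in> closure (B \<inter> spec n)"
    unfolding closure_approachable
  proof (intro allI impI)
    fix e :: real
    assume "e > 0"
    have "x \<in> closure B"
      using assms(1) by simp
    then obtain b where "b \<in> B" and "dist b x < e"
      using \<open>e > 0\<close> unfolding closure_approachable by blast
    have "dist (proj n b) x = norm (proj n (b - x))"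
      using proj_eq_self[OF x] by (simp add: dist_norm proj_diff)
    also have "\<dots> < e"
      using norm_proj_le[of n "b - x"] \<open>dist b x < e\<close> by (simp add: dist_norm)
    finally show "\<exists>y\<in>B \<inter> spec n. dist y x < e"
      using assms(2) \<open>b \<in> B\<close> proj_in_spec by blast
  qed
qed

end

section \<open>Unit frames and invariant subalgebras\<close>

context cstar_algebra
begin

definition has_unit_frame :: "'a set \<Rightarrow> bool" where
  "has_unit_frame S \<longleftrightarrow> (\<exists>zs. set zs \<subseteq> S \<and> (\<Sum>z\<leftarrow>zs. z * st z) = 1)"

lemma has_unit_frame_iff_family:
  "has_unit_frame S \<longleftrightarrow> (\<exists>(p::nat) z. (\<forall>j<p. z j \<in> S) \<and> (\<Sum>j<p. z j * st (z j)) = 1)"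
proof
  assume "has_unit_frame S"
  then obtain zs where "set zs \<subseteq> S" and "(\<Sum>z\<leftarrow>zs. z * st z) = 1"
    unfolding has_unit_frame_def by blast
  then have "(\<forall>j<length zs. zs ! j \<in> S) \<and> (\<Sum>j<length zs. zs ! j * st (zs ! j)) = 1"
    by (auto simp: sum_list_sum_nth atLeast0LessThan)
  then show "\<exists>(p::nat) z. (\<forall>j<p. z j \<in> S) \<and> (\<Sum>j<p. z j * st (z j)) = 1"
    by blast
next
  assume "\<exists>(p::nat) z. (\<forall>j<p. z j \<in> S) \<and> (\<Sum>j<p. z j * st (z j)) = 1"
  then obtain p :: nat and z where "\<forall>j<p. z j \<in> S" and "(\<Sum>j<p. z j * st (z j)) = 1"
    by blast
  then have "set (map z [0..<p]) \<subseteq> S \<and> (\<Sum>x\<leftarrow>map z [0..<p]. x * st x) = 1"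
    by (auto simp: interv_sum_list_conv_sum_set_nat atLeast0LessThan o_def)
  then show "has_unit_frame S"
    unfolding has_unit_frame_def by blast
qed

lemma has_unit_frame_imp_frame:
  assumes "has_unit_frame S"
  shows "\<exists>(p::nat) z. (\<forall>j<p. z j \<in> S) \<and> (\<forall>x\<in>S. (\<Sum>j<p. z j * st (z j) * x) = x)"
proof -
  obtain p :: nat and z where "\<forall>j<p. z j \<in> S" and "(\<Sum>j<p. z j * st (z j)) = 1"
    using assms unfolding has_unit_frame_iff_family by blast
  moreover have "(\<Sum>j<p. z j * st (z j) * x) = (\<Sum>j<p. z j * st (z j)) * x" for x
    by (simp add: sum_distrib_right)
  ultimately show ?thesis
    by auto
qed

lemma has_unit_frame_one: "1 \<in> S \<Longrightarrow> has_unit_frame S"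
  unfolding has_unit_frame_def by (intro exI[of _ "[1]"]) simp

lemma has_unit_frame_mult:
  assumes "has_unit_frame S" and "has_unit_frame T"
    and "\<And>s t. s \<in> S \<Longrightarrow> t \<in> T \<Longrightarrow> s * t \<in> U"
  shows "has_unit_frame U"
proof -
  obtain ss where ss: "set ss \<subseteq> S" "(\<Sum>s\<leftarrow>ss. s * st s) = 1"
    using assms(1) unfolding has_unit_frame_def by blast
  obtain ts where ts: "set ts \<subseteq> T" "(\<Sum>t\<leftarrow>ts. t * st t) = 1"
    using assms(2) unfolding has_unit_frame_def by blast
  have "(\<Sum>t\<leftarrow>ts. (s * t) * st (s * t)) = s * st s" for s
    using ts(2) sum_list_const_mult[of s "\<lambda>t. t * st t" ts]
      sum_list_mult_const[of "\<lambda>t. s * (t * st t)" "st s" ts]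
    by (simp add: st_mult mult.assoc)
  then have "(\<Sum>z\<leftarrow>[s * t. s \<leftarrow> ss, t \<leftarrow> ts]. z * st z) = (\<Sum>s\<leftarrow>ss. s * st s)"
    by (induction ss) (simp_all add: o_def)
  moreover have "set [s * t. s \<leftarrow> ss, t \<leftarrow> ts] \<subseteq> U"
    using ss(1) ts(1) assms(3) by auto
  ultimately show ?thesis
    unfolding has_unit_frame_def using ss(2) by (intro exI[of _ "[s * t. s \<leftarrow> ss, t \<leftarrow> ts]"]) simp
qed

end

locale star_subalgebra = cstar_algebra sc st
  for sc :: "complex \<Rightarrow> 'a::{real_normed_algebra_1,banach} \<Rightarrow> 'a" and st +
  fixes B :: "'a set"
  assumes zero_mem: "0 \<in> B"
    and one_mem: "1 \<in> B"
    and add_mem: "x \<in> B \<Longrightarrow> y \<in> B \<Longrightarrow> x + y \<in> B"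
    and mult_mem: "x \<in> B \<Longrightarrow> y \<in> B \<Longrightarrow> x * y \<in> B"
    and st_mem: "x \<in> B \<Longrightarrow> st x \<in> B"
begin

lemma sum_list_mem: "(\<And>x. x \<in> set xs \<Longrightarrow> f x \<in> B) \<Longrightarrow> (\<Sum>x\<leftarrow>xs. f x) \<in> B"
  by (induction xs) (simp_all add: zero_mem add_mem)

end

locale circle_subalgebra = circle_action sc st \<sigma> + star_subalgebra sc st B
  for sc :: "complex \<Rightarrow> 'a::{real_normed_algebra_1,banach} \<Rightarrow> 'a" and st \<sigma> B
begin

lemma has_unit_frame_spec:
  assumes "has_unit_frame (B \<inter> spec 1)" and "has_unit_frame (B \<inter> spec (- 1))"
  shows "has_unit_frame (B \<inter> spec n)"
proof (induction n rule: int_induct[where k = 0])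
  case base
  show ?case
    by (rule has_unit_frame_one) (simp add: one_mem one_in_spec_0)
next
  case (step1 i)
  have "s * t \<in> B \<inter> spec (i + 1)" if "s \<in> B \<inter> spec i" and "t \<in> B \<inter> spec 1" for s t
    using that by (auto intro: mult_mem mult_in_spec)
  then show ?case
    by (rule has_unit_frame_mult[OF step1(2) assms(1)])
next
  case (step2 i)
  have "s * t \<in> B \<inter> spec (i - 1)" if "s \<in> B \<inter> spec i" and "t \<in> B \<inter> spec (- 1)" for s t
    using that mult_in_spec[of s i t "- 1"] by (auto intro: mult_mem)
  then show ?case
    by (rule has_unit_frame_mult[OF step2(2) assms(2)])
qed

lemma proj_image_subset_shift:
  assumes "has_unit_frame (B \<inter> spec d)" and "proj n ` B \<subseteq> B"
  shows "proj (n + d) ` B \<subseteq> B"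
proof
  fix y
  assume "y \<in> proj (n + d) ` B"
  then obtain x where "x \<in> B" and y: "y = proj (n + d) x"
    by blast
  obtain zs where zs: "set zs \<subseteq> B \<inter> spec d" "(\<Sum>z\<leftarrow>zs. z * st z) = 1"
    using assms(1) unfolding has_unit_frame_def by blast
  have "x = (\<Sum>z\<leftarrow>zs. z * (st z * x))"
    using zs(2) sum_list_mult_const[of "\<lambda>z. z * st z" x zs] by (simp add: mult.assoc)
  then have "y = (\<Sum>z\<leftarrow>zs. proj (n + d) (z * (st z * x)))"
    unfolding y by (metis proj_sum_list)
  also have "\<dots> = (\<Sum>z\<leftarrow>zs. z * proj n (st z * x))"
    using zs(1) by (intro arg_cong[where f = sum_list] map_cong refl) (auto simp: proj_mult_left)
  also have "\<dots> \<in> B"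
    using zs(1) assms(2) \<open>x \<in> B\<close>
    by (intro sum_list_mem mult_mem) (auto simp: image_subset_iff intro: mult_mem st_mem)
  finally show "y \<in> B" .
qed

lemma proj_image_subset:
  assumes "proj 0 ` B \<subseteq> B"
    and "has_unit_frame (B \<inter> spec 1)" and "has_unit_frame (B \<inter> spec (- 1))"
  shows "proj n ` B \<subseteq> B"
proof (induction n rule: int_induct[where k = 0])
  case (step1 i)
  then show ?case
    using proj_image_subset_shift[OF assms(2)] by blast
next
  case (step2 i)
  then show ?case
    using proj_image_subset_shift[OF assms(3), of i] by simp
qed (rule assms(1))

end

lemma (in cstar_algebra) star_subalgebra_if_dense_unital_star_subalg:
  assumes "dense_unital_star_subalg sc st B"
  shows "star_subalgebra sc st B"
proof unfold_locales
  show "0 \<in> B"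
    using assms sc_of_real[of 0 1] unfolding dense_unital_star_subalg_def
    by (metis of_real_0 scale_zero_left)
qed (use assms in \<open>simp_all add: dense_unital_star_subalg_def\<close>)

theorem lemma5p2:
  fixes sc :: "complex \<Rightarrow> 'a::{real_normed_algebra_1,banach} \<Rightarrow> 'a"
    and st :: "'a \<Rightarrow> 'a"
    and \<sigma> :: "complex \<Rightarrow> 'a \<Rightarrow> 'a"
    and B :: "'a set"
    and zR zL :: "nat \<Rightarrow> 'a"
    and k m :: nat
  assumes "cstar_alg sc st"
    and "s1_action sc st \<sigma>"
    and "dense_unital_star_subalg sc st B"
    and "spec_proj sc \<sigma> 0 ` B \<subseteq> B"
    and "\<forall>j<k. zR j \<in> B \<inter> spec_sub sc \<sigma> 1"
    and "\<forall>j<m. zL j \<in> B \<inter> spec_sub sc \<sigma> 1"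
    and "(\<Sum>j<k. zR j * st (zR j)) = 1"
    and "(\<Sum>j<m. st (zL j) * zL j) = 1"
  shows "\<forall>n::int.
           spec_proj sc \<sigma> n ` B = B \<inter> spec_sub sc \<sigma> n \<and>
           (\<exists>(mn::nat) (z::nat \<Rightarrow> 'a). (\<forall>j<mn. z j \<in> B \<inter> spec_sub sc \<sigma> n) \<and>
                (\<Sum>j<mn. z j * st (z j)) = 1) \<and>
           spec_sub sc \<sigma> n \<subseteq> closure (B \<inter> spec_sub sc \<sigma> n) \<and>
           (\<exists>(p::nat) (z::nat \<Rightarrow> 'a). (\<forall>j<p. z j \<in> B \<inter> spec_sub sc \<sigma> n) \<and>
                (\<forall>x \<in> B \<inter> spec_sub sc \<sigma> n. (\<Sum>j<p. z j * st (z j) * x) = x))"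
proof -
  interpret circle_action sc st \<sigma>
    using assms(1,2) by unfold_locales
  interpret star_subalgebra sc st B
    by (rule star_subalgebra_if_dense_unital_star_subalg[OF assms(3)])
  interpret circle_subalgebra sc st \<sigma> B ..
  have "has_unit_frame (B \<inter> spec 1)"
    unfolding has_unit_frame_iff_family using assms(5,7) by blast
  moreover have "has_unit_frame (B \<inter> spec (- 1))"
    unfolding has_unit_frame_iff_family
    by (intro exI[of _ m] exI[of _ "\<lambda>j. st (zL j)"])
      (use assms(6,8) in \<open>auto intro: st_mem st_in_spec\<close>)
  ultimately have proj_B: "proj n ` B \<subseteq> B" and frame: "has_unit_frame (B \<inter> spec n)" for n
    by (simp_all add: proj_image_subset[OF assms(4)] has_unit_frame_spec)
  have "closure B = UNIV"
    using assms(3) by (simp add: dense_unital_star_subalg_def)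
  show ?thesis
    by (intro allI conjI proj_image_eq[OF proj_B] spec_subset_closure[OF \<open>closure B = UNIV\<close> proj_B]
        frame[unfolded has_unit_frame_iff_family] has_unit_frame_imp_frame[OF frame])
qed

end
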